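(* $\mathrm{Im}\,\Phi$ is a subgroup of $M(\mathcal{O}_{\bf q}(k^{n}))$, and it is normal in $M(\mathcal{O}_{\bf q}(k^{n}))$.
   Context: Let $k$ be a field, $n\ge1$, and ${\bf q}=(q_{ij})\in\mathcal M_n(k)$ with $q_{ij}q_{ji}=1$, $q_{ii}=1$ for all $i,j$. $\mathcal{O}_{\bf q}(k^{n})=k\langle x_1,\dots,x_n\rangle/\langle x_jx_i-q_{ij}x_ix_j\rangle$, graded with $\deg x_i=1$. $M(\mathcal{O}_{\bf q}(k^{n}))$ is the set of $A=(a_{ij})\in \mathrm{GL}_n(k)$ such that $x_i\mapsto \sum_j a_{ji}x_j$ extends to a graded algebra automorphism of $\mathcal{O}_{\bf q}(k^{n})$; it is a subgroup of $\mathrm{GL}_n(k)$ isomorphic to $\mathrm{Aut}_{\rm gr}(\mathcal{O}_{\bf q}(k^{n}))$. $B(i)=\{1\le i'\le n: q_{i'j}=q_{ij}\ \forall j\}$; the distinct blocks $B_1,\dots,B_m$ partition $\{1,\dots,n\}$. $\Phi:\prod_{w=1}^m\mathrm{GL}_{|B_w|}(k)\to\mathrm{GL}_n(k)$ sends $(M_1,\dots,M_m)$ to the matrix whose submatrix with rows $B_w$ and columns $B_v$ (indices in increasing order) is $\delta_{wv}M_w$; it is an injective group homomorphism, and $\mathrm{Im}\,\Phi$ is the set of ${\bf m}=(m_{ij})\in\mathrm{GL}_n(k)$ with $m_{ij}=0$ whenever $B(i)\ne B(j)$. *)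

theory Defs
  imports "HOL-Algebra.Coset"
begin

(* n x n matrices over a field, indices 0..n-1 (0-based), entries outside the range are 0 *)
type_synonym 'a mat = "nat \<Rightarrow> nat \<Rightarrow> 'a"

definition matmul :: "nat \<Rightarrow> 'a::field mat \<Rightarrow> 'a mat \<Rightarrow> 'a mat" where
  "matmul n A B = (\<lambda>i j. \<Sum>l<n. A i l * B l j)"

definition idm :: "nat \<Rightarrow> 'a::field mat" where
  "idm n = (\<lambda>i j. if i = j \<and> i < n then 1 else 0)"

definition is_nmat :: "nat \<Rightarrow> 'a::field mat \<Rightarrow> bool" where
  "is_nmat n A \<longleftrightarrow> (\<forall>i j. (n \<le> i \<or> n \<le> j) \<longrightarrow> A i j = 0)"

definition GL :: "nat \<Rightarrow> 'a::field mat set" where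
  "GL n = {A. is_nmat n A \<and> (\<exists>B. is_nmat n B \<and> matmul n A B = idm n \<and> matmul n B A = idm n)}"

(* Free algebra k<x_0,...,x_{n-1}>: finitely supported functions on words (letters < n) *)
type_synonym 'a fa = "nat list \<Rightarrow> 'a"

definition fa_carrier :: "nat \<Rightarrow> 'a::field fa set" where
  "fa_carrier n = {f. finite {w. f w \<noteq> 0} \<and> (\<forall>w. f w \<noteq> 0 \<longrightarrow> set w \<subseteq> {..<n})}"

definition fa_mult :: "'a::field fa \<Rightarrow> 'a fa \<Rightarrow> 'a fa" where
  "fa_mult f g = (\<lambda>w. \<Sum>i\<le>length w. f (take i w) * g (drop i w))"

definition fa_word :: "nat list \<Rightarrow> 'a::field fa" where
  "fa_word w = (\<lambda>u. if u = w then 1 else 0)"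

definition qrel :: "'a::field mat \<Rightarrow> nat \<Rightarrow> nat \<Rightarrow> 'a fa" where
  "qrel q i j = (\<lambda>u. fa_word [j, i] u - q i j * fa_word [i, j] u)"

inductive_set qideal :: "nat \<Rightarrow> 'a::field mat \<Rightarrow> 'a fa set" for n q where
  zero: "(\<lambda>_. 0) \<in> qideal n q"
| add: "f \<in> qideal n q \<Longrightarrow> g \<in> qideal n q \<Longrightarrow> (\<lambda>u. f u + g u) \<in> qideal n q"
| gen: "i < n \<Longrightarrow> j < n \<Longrightarrow> a \<in> fa_carrier n \<Longrightarrow> b \<in> fa_carrier n \<Longrightarrow>
        fa_mult (fa_mult a (qrel q i j)) b \<in> qideal n q"

(* the unique algebra endomorphism of the free algebra with x_i \<mapsto> \<Sum>_j a_ji x_j *)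
definition fa_subst :: "'a::field mat \<Rightarrow> 'a fa \<Rightarrow> 'a fa" where
  "fa_subst A f = (\<lambda>u. \<Sum>w\<in>{w. f w \<noteq> 0 \<and> length w = length u}.
                         f w * (\<Prod>t<length u. A (u ! t) (w ! t)))"

(* M(O_q(k^n)): invertible A such that x_i \<mapsto> \<Sum>_j a_ji x_j extends to a (graded) algebra
   automorphism of O_q = free algebra / qideal: the substitution must preserve the ideal
   (well-defined on the quotient) and the induced map must be bijective on the quotient. *)
definition Mq :: "nat \<Rightarrow> 'a::field mat \<Rightarrow> 'a mat set" where
  "Mq n q = {A \<in> GL n.
      (\<forall>f \<in> qideal n q. fa_subst A f \<in> qideal n q)
    \<and> (\<forall>g \<in> fa_carrier n. \<exists>f \<in> fa_carrier n. (\<lambda>u. fa_subst A f u - g u) \<in> qideal n q)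
    \<and> (\<forall>f \<in> fa_carrier n. fa_subst A f \<in> qideal n q \<longrightarrow> f \<in> qideal n q)}"

definition Mgrp :: "nat \<Rightarrow> 'a::field mat \<Rightarrow> 'a mat monoid" where
  "Mgrp n q = \<lparr>carrier = Mq n q, mult = matmul n, one = idm n\<rparr>"

definition blk :: "nat \<Rightarrow> 'a mat \<Rightarrow> nat \<Rightarrow> nat set" where
  "blk n q i = {i'. i' < n \<and> (\<forall>j<n. q i' j = q i j)}"

(* Im Phi, via the characterization given in the context *)
definition ImPhi :: "nat \<Rightarrow> 'a::field mat \<Rightarrow> 'a mat set" where
  "ImPhi n q = {m \<in> GL n. \<forall>i<n. \<forall>j<n. blk n q i \<noteq> blk n q j \<longrightarrow> m i j = 0}"

end

theory Submission
  imports Defs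
begin

text \<open>Substitution by a matrix is an endomorphism of the free algebra, and composing
  substitutions multiplies matrices, so \<^const>\<open>Mq\<close> is a group consisting of the invertible
  matrices that, together with their inverses, preserve the ideal of relations.
  A block-diagonal matrix maps each relation \<open>x\<^sub>j x\<^sub>i - q\<^sub>i\<^sub>j x\<^sub>i x\<^sub>j\<close> to a linear
  combination of relations, because its nonzero entries only connect indices with equal rows
  of \<open>q\<close>; and block-diagonal matrices are closed under products and inverses (they are the
  matrices commuting with the block projections).
  For normality, the key fact is that the coefficients of \<open>x\<^sub>a x\<^sub>a\<close>, \<open>x\<^sub>a x\<^sub>b\<close>,
  \<open>x\<^sub>b x\<^sub>a\<close> of an ideal element satisfy two linear identities; applied to the image of a
  relation under \<open>X \<in> Mq\<close> they show that \<open>X\<^sub>a\<^sub>i \<noteq> 0\<close> and \<open>X\<^sub>b\<^sub>j \<noteq> 0\<close> force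
  \<open>q\<^sub>a\<^sub>b = q\<^sub>i\<^sub>j\<close>. Hence conjugation by \<open>X\<close> cannot join two different blocks.\<close>

section \<open>Matrices\<close>

lemma matmul_assoc: "matmul n (matmul n A B) C = matmul n A (matmul n B C)"
proof (intro ext)
  fix i j
  have "(\<Sum>l<n. (\<Sum>k<n. A i k * B k l) * C l j) = (\<Sum>l<n. \<Sum>k<n. A i k * (B k l * C l j))"
    by (simp add: sum_distrib_right mult.assoc)
  also have "\<dots> = (\<Sum>k<n. \<Sum>l<n. A i k * (B k l * C l j))" by (rule sum.swap)
  also have "\<dots> = (\<Sum>k<n. A i k * (\<Sum>l<n. B k l * C l j))" by (simp add: sum_distrib_left)
  finally show "matmul n (matmul n A B) C i j = matmul n A (matmul n B C) i j"
    by (simp add: matmul_def)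
qed

lemma is_nmat_outside: "is_nmat n A \<Longrightarrow> n \<le> i \<or> n \<le> j \<Longrightarrow> A i j = 0"
  by (auto simp: is_nmat_def)

lemma is_nmat_idm: "is_nmat n (idm n)"
  by (simp add: is_nmat_def idm_def)

lemma is_nmat_matmul: "is_nmat n A \<Longrightarrow> is_nmat n B \<Longrightarrow> is_nmat n (matmul n A B)"
  unfolding is_nmat_def matmul_def by auto

lemma matmul_idm_left:
  assumes "is_nmat n A"
  shows "matmul n (idm n) A = A"
proof (intro ext)
  fix i j
  have "matmul n (idm n) A i j = (\<Sum>l<n. if l = i then (if i < n then A i j else 0) else 0)"
    unfolding matmul_def idm_def by (intro sum.cong) auto
  then show "matmul n (idm n) A i j = A i j"
    using is_nmat_outside[OF assms, of i j] by simp
qed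

lemma matmul_idm_right:
  assumes "is_nmat n A"
  shows "matmul n A (idm n) = A"
proof (intro ext)
  fix i j
  have "matmul n A (idm n) i j = (\<Sum>l<n. if l = j then (if j < n then A i j else 0) else 0)"
    unfolding matmul_def idm_def by (intro sum.cong) auto
  then show "matmul n A (idm n) i j = A i j"
    using is_nmat_outside[OF assms, of i j] by simp
qed

lemma matmul_nonzeroE:
  assumes "matmul n A B i j \<noteq> 0"
  obtains l where "l < n" "A i l \<noteq> 0" "B l j \<noteq> 0"
  using assms unfolding matmul_def by (auto elim: sum.not_neutral_contains_not_neutral)

lemma GL_iff: "A \<in> GL n \<longleftrightarrow> is_nmat n A \<and> (\<exists>B. is_nmat n B \<and> matmul n A B = idm n \<and> matmul n B A = idm n)"
  by (simp add: GL_def)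

lemma GL_is_nmat: "A \<in> GL n \<Longrightarrow> is_nmat n A"
  by (simp add: GL_def)

lemma GL_inverseE:
  assumes "A \<in> GL n"
  obtains B where "is_nmat n B" "matmul n A B = idm n" "matmul n B A = idm n"
  using assms by (auto simp: GL_def)

lemma idm_in_GL: "idm n \<in> GL n"
  using is_nmat_idm matmul_idm_left[OF is_nmat_idm] by (auto simp: GL_def)

lemma GL_matmul:
  assumes "A \<in> GL n" "B \<in> GL n"
  shows "matmul n A B \<in> GL n"
proof -
  obtain A' where A': "is_nmat n A'" "matmul n A A' = idm n" "matmul n A' A = idm n"
    using assms(1) by (rule GL_inverseE)
  obtain B' where B': "is_nmat n B'" "matmul n B B' = idm n" "matmul n B' B = idm n"
    using assms(2) by (rule GL_inverseE)
  have "matmul n (matmul n A B) (matmul n B' A') = idm n"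
    by (metis A'(1,2) B'(2) matmul_assoc matmul_idm_left)
  moreover have "matmul n (matmul n B' A') (matmul n A B) = idm n"
    by (metis A'(3) B'(3) GL_is_nmat assms(2) matmul_assoc matmul_idm_left)
  ultimately show ?thesis
    using A' B' GL_is_nmat[OF assms(1)] GL_is_nmat[OF assms(2)]
    by (auto simp: GL_iff intro!: is_nmat_matmul exI[of _ "matmul n B' A'"])
qed

lemma GL_rows_not_proportional:
  assumes A: "A \<in> GL n" and ab: "a < n" "b < n" "a \<noteq> b"
    and proportional: "\<And>j. j < n \<Longrightarrow> A b j = c * A a j"
  shows False
proof -
  obtain B where B: "matmul n A B = idm n" using A by (rule GL_inverseE)
  have "matmul n A B b a = c * matmul n A B a a"
    unfolding matmul_def by (simp add: proportional sum_distrib_left mult.assoc)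
  then have "c = 0" using B ab by (simp add: idm_def)
  then have "matmul n A B b b = 0" unfolding matmul_def by (simp add: proportional)
  then show False using B ab by (simp add: idm_def)
qed

lemma matmul_inverse_commute:
  assumes "is_nmat n A" "is_nmat n B" "is_nmat n D"
    and AB: "matmul n A B = idm n" and BA: "matmul n B A = idm n"
    and AD: "matmul n A D = matmul n D A"
  shows "matmul n B D = matmul n D B"
proof -
  have "matmul n B D = matmul n (matmul n B D) (matmul n A B)"
    using AB assms(2,3) by (simp add: matmul_idm_right is_nmat_matmul)
  also have "\<dots> = matmul n B (matmul n (matmul n A D) B)"
    by (simp add: AD matmul_assoc)
  also have "\<dots> = matmul n (matmul n B A) (matmul n D B)"
    by (simp add: matmul_assoc)
  also have "\<dots> = matmul n D B"
    using BA assms(2,3) by (simp add: matmul_idm_left is_nmat_matmul)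
  finally show ?thesis .
qed

definition diag_proj :: "nat \<Rightarrow> (nat \<Rightarrow> bool) \<Rightarrow> 'a::field mat" where
  "diag_proj n P = (\<lambda>a b. if a = b \<and> a < n \<and> P a then 1 else 0)"

lemma is_nmat_diag_proj: "is_nmat n (diag_proj n P)"
  by (simp add: is_nmat_def diag_proj_def)

lemma matmul_diag_proj_right: "matmul n A (diag_proj n P) a b = (if b < n \<and> P b then A a b else 0)"
proof -
  have "matmul n A (diag_proj n P) a b = (\<Sum>l<n. if l = b then (if b < n \<and> P b then A a b else 0) else 0)"
    unfolding matmul_def diag_proj_def by (intro sum.cong refl) auto
  then show ?thesis by simp
qed

lemma matmul_diag_proj_left: "matmul n (diag_proj n P) A a b = (if a < n \<and> P a then A a b else 0)"
proof -
  have "matmul n (diag_proj n P) A a b = (\<Sum>l<n. if l = a then (if a < n \<and> P a then A a b else 0) else 0)"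
    unfolding matmul_def diag_proj_def by (intro sum.cong refl) auto
  then show ?thesis by simp
qed


section \<open>Words and the free algebra\<close>

definition words :: "nat \<Rightarrow> nat \<Rightarrow> nat list set" where
  "words n L = {w. length w = L \<and> set w \<subseteq> {..<n}}"

lemma finite_words [simp]: "finite (words n L)"
  unfolding words_def using finite_lists_length_eq[of "{..<n}" L] by (simp add: conj_commute)

lemma words_0: "words n 0 = {[]}"
  by (auto simp: words_def)

lemma words_Suc: "words n (Suc L) = (\<lambda>(l, v). l # v) ` ({..<n} \<times> words n L)"
  by (auto simp: words_def length_Suc_conv image_def)

lemma sum_words_prod:
  "(\<Sum>v\<in>words n L. \<Prod>t<L. h t (v ! t)) = (\<Prod>t<L. \<Sum>l<n. (h t l :: 'a::comm_semiring_1))"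
proof (induction L arbitrary: h)
  case 0
  then show ?case by (simp add: words_0)
next
  case (Suc L)
  have inj: "inj_on (\<lambda>(l, v). l # v) ({..<n} \<times> words n L)"
    by (auto simp: inj_on_def)
  have "(\<Sum>v\<in>words n (Suc L). \<Prod>t<Suc L. h t (v ! t))
      = (\<Sum>(l, v)\<in>{..<n} \<times> words n L. h 0 l * (\<Prod>t<L. h (Suc t) (v ! t)))"
    unfolding words_Suc
    by (subst sum.reindex[OF inj]) (simp add: case_prod_unfold prod.lessThan_Suc_shift del: prod.lessThan_Suc)
  also have "\<dots> = (\<Sum>l<n. h 0 l) * (\<Sum>v\<in>words n L. \<Prod>t<L. h (Suc t) (v ! t))"
    by (simp add: sum.cartesian_product[symmetric] sum_product)
  also have "\<dots> = (\<Sum>l<n. h 0 l) * (\<Prod>t<L. \<Sum>l<n. h (Suc t) l)"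
    using Suc.IH[of "\<lambda>t. h (Suc t)"] by simp
  finally show ?case by (simp add: prod.lessThan_Suc_shift del: prod.lessThan_Suc)
qed

lemma bij_betw_append_words:
  assumes "i \<le> L"
  shows "bij_betw (\<lambda>(a, b). a @ b) (words n i \<times> words n (L - i)) (words n L)"
proof (rule bij_betwI')
  fix x y assume x: "x \<in> words n i \<times> words n (L - i)" and y: "y \<in> words n i \<times> words n (L - i)"
  obtain a b c d where xy: "x = (a, b)" "y = (c, d)" by (cases x, cases y)
  have "length a = length c" using x y xy by (simp add: words_def)
  then show "((case x of (a, b) \<Rightarrow> a @ b) = (case y of (a, b) \<Rightarrow> a @ b)) = (x = y)"
    using xy by simp
next
  fix x assume "x \<in> words n i \<times> words n (L - i)"
  then show "(case x of (a, b) \<Rightarrow> a @ b) \<in> words n L"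
    using assms by (auto simp: words_def)
next
  fix y assume "y \<in> words n L"
  then have "(take i y, drop i y) \<in> words n i \<times> words n (L - i)"
    using assms set_take_subset[of i y] set_drop_subset[of i y] by (auto simp: words_def)
  then show "\<exists>x\<in>words n i \<times> words n (L - i). y = (case x of (a, b) \<Rightarrow> a @ b)"
    by (intro bexI[of _ "(take i y, drop i y)"]) auto
qed

lemma prod_lessThan_split:
  fixes i L :: nat
  assumes "i \<le> L"
  shows "(\<Prod>t<L. F t) = (\<Prod>t<i. F t) * (\<Prod>t<L - i. F (i + t))"
proof -
  have "{..<L} = {..<i} \<union> {i..<L}" using assms by auto
  then have "(\<Prod>t<L. F t) = (\<Prod>t<i. F t) * (\<Prod>t\<in>{i..<L}. F t)"
    by (simp add: prod.union_disjoint ivl_disj_int)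
  also have "(\<Prod>t\<in>{i..<L}. F t) = (\<Prod>t<L - i. F (i + t))"
    using assms by (intro prod.reindex_bij_witness[of _ "\<lambda>t. i + t" "\<lambda>t. t - i"]) auto
  finally show ?thesis .
qed

lemma fa_carrier_finite: "f \<in> fa_carrier n \<Longrightarrow> finite {w. f w \<noteq> 0}"
  by (simp add: fa_carrier_def)

lemma fa_carrier_letters: "f \<in> fa_carrier n \<Longrightarrow> f w \<noteq> 0 \<Longrightarrow> set w \<subseteq> {..<n}"
  by (simp add: fa_carrier_def)

lemma fa_carrier_zero: "(\<lambda>_. 0) \<in> fa_carrier n"
  by (simp add: fa_carrier_def)

lemma fa_carrier_add:
  assumes "f \<in> fa_carrier n" "g \<in> fa_carrier n"
  shows "(\<lambda>u. f u + g u) \<in> fa_carrier n"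
proof -
  have "{w. f w + g w \<noteq> 0} \<subseteq> {w. f w \<noteq> 0} \<union> {w. g w \<noteq> 0}" by auto
  moreover have "set w \<subseteq> {..<n}" if "f w + g w \<noteq> 0" for w
    using that fa_carrier_letters[OF assms(1), of w] fa_carrier_letters[OF assms(2), of w]
    by (cases "f w = 0") auto
  ultimately show ?thesis
    using fa_carrier_finite[OF assms(1)] fa_carrier_finite[OF assms(2)]
    unfolding fa_carrier_def by (auto intro: finite_subset)
qed

lemma fa_carrier_smult: "f \<in> fa_carrier n \<Longrightarrow> (\<lambda>u. c * f u) \<in> fa_carrier n"
  unfolding fa_carrier_def by (auto intro: finite_subset[of _ "{w. f w \<noteq> 0}"])

lemma fa_carrier_diff:
  assumes "f \<in> fa_carrier n" "g \<in> fa_carrier n"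
  shows "(\<lambda>u. f u - g u) \<in> fa_carrier n"
  using fa_carrier_add[OF assms(1) fa_carrier_smult[OF assms(2), of "-1"]] by simp

lemma fa_word_in_carrier: "set w \<subseteq> {..<n} \<Longrightarrow> fa_word w \<in> fa_carrier n"
  by (simp add: fa_carrier_def fa_word_def)

lemma fa_mult_nonzeroE:
  assumes "fa_mult f g u \<noteq> 0"
  obtains i where "f (take i u) \<noteq> 0" "g (drop i u) \<noteq> 0"
proof -
  obtain i where "f (take i u) * g (drop i u) \<noteq> 0"
    using assms unfolding fa_mult_def by (rule sum.not_neutral_contains_not_neutral)
  then show thesis using that by auto
qed

lemma fa_carrier_mult:
  assumes f: "f \<in> fa_carrier n" and g: "g \<in> fa_carrier n"
  shows "fa_mult f g \<in> fa_carrier n"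
proof -
  have "{u. fa_mult f g u \<noteq> 0} \<subseteq> (\<lambda>(v, w). v @ w) ` ({w. f w \<noteq> 0} \<times> {w. g w \<noteq> 0})"
  proof
    fix u assume "u \<in> {u. fa_mult f g u \<noteq> 0}"
    then obtain i where "f (take i u) \<noteq> 0" "g (drop i u) \<noteq> 0"
      by (auto elim: fa_mult_nonzeroE)
    then show "u \<in> (\<lambda>(v, w). v @ w) ` ({w. f w \<noteq> 0} \<times> {w. g w \<noteq> 0})"
      by (intro image_eqI[of _ _ "(take i u, drop i u)"]) auto
  qed
  then have "finite {u. fa_mult f g u \<noteq> 0}"
    using fa_carrier_finite[OF f] fa_carrier_finite[OF g] by (auto intro: finite_subset)
  moreover have "set u \<subseteq> {..<n}" if nonzero: "fa_mult f g u \<noteq> 0" for u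
  proof -
    obtain i where "f (take i u) \<noteq> 0" "g (drop i u) \<noteq> 0"
      using nonzero by (rule fa_mult_nonzeroE)
    then have "set (take i u) \<subseteq> {..<n}" "set (drop i u) \<subseteq> {..<n}"
      using fa_carrier_letters[OF f] fa_carrier_letters[OF g] by auto
    then show ?thesis by (metis append_take_drop_id set_append Un_subset_iff)
  qed
  ultimately show ?thesis by (simp add: fa_carrier_def)
qed

lemma fa_mult_sum_right: "fa_mult f (\<lambda>u. \<Sum>k\<in>S. G k u) u = (\<Sum>k\<in>S. fa_mult f (G k) u)"
  unfolding fa_mult_def by (simp add: sum_distrib_left) (rule sum.swap)

lemma fa_mult_sum_left: "fa_mult (\<lambda>u. \<Sum>k\<in>S. G k u) f u = (\<Sum>k\<in>S. fa_mult (G k) f u)"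
  unfolding fa_mult_def by (simp add: sum_distrib_right) (rule sum.swap)

lemma fa_mult_smult_right: "fa_mult f (\<lambda>u. c * g u) u = c * fa_mult f g u"
  unfolding fa_mult_def by (simp add: sum_distrib_left mult_ac)

lemma fa_mult_smult_left: "fa_mult (\<lambda>u. c * g u) f u = c * fa_mult g f u"
  unfolding fa_mult_def by (simp add: sum_distrib_left mult_ac)

lemma fa_mult_word_Nil_left [simp]: "fa_mult (fa_word []) f = f"
proof
  fix u :: "nat list"
  have "fa_mult (fa_word []) f u = (\<Sum>i\<le>length u. if i = 0 then f u else 0)"
    unfolding fa_mult_def fa_word_def by (intro sum.cong refl) auto
  then show "fa_mult (fa_word []) f u = f u" by simp
qed

lemma fa_mult_word_Nil_right [simp]: "fa_mult f (fa_word []) = f"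
proof
  fix u :: "nat list"
  have "fa_mult f (fa_word []) u = (\<Sum>i\<le>length u. if i = length u then f u else 0)"
    unfolding fa_mult_def fa_word_def by (intro sum.cong refl) auto
  then show "fa_mult f (fa_word []) u = f u" by simp
qed


section \<open>Linear substitutions\<close>

lemma fa_subst_eq_sum_words:
  assumes "f \<in> fa_carrier n"
  shows "fa_subst A f u = (\<Sum>w\<in>words n (length u). f w * (\<Prod>t<length u. A (u ! t) (w ! t)))"
  unfolding fa_subst_def
  by (rule sum.mono_neutral_left)
     (use fa_carrier_letters[OF assms] finite_words[of n "length u", unfolded words_def] in
       \<open>auto simp: words_def\<close>)

lemma fa_subst_outside:
  assumes "is_nmat n A" "\<not> set u \<subseteq> {..<n}"
  shows "fa_subst A f u = 0"
proof -
  obtain t where t: "t < length u" "n \<le> u ! t"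
    using assms(2) by (auto simp: in_set_conv_nth subset_iff)
  have "(\<Prod>t<length u. A (u ! t) (w ! t)) = 0" for w
    using t is_nmat_outside[OF assms(1)] by (intro prod_zero) auto
  then show ?thesis unfolding fa_subst_def by (intro sum.neutral) simp
qed

lemma fa_subst_in_carrier:
  assumes f: "f \<in> fa_carrier n" and A: "is_nmat n A"
  shows "fa_subst A f \<in> fa_carrier n"
proof -
  have "{u. fa_subst A f u \<noteq> 0} \<subseteq> (\<Union>w\<in>{w. f w \<noteq> 0}. words n (length w))"
  proof
    fix u assume u: "u \<in> {u. fa_subst A f u \<noteq> 0}"
    then have "set u \<subseteq> {..<n}" using fa_subst_outside[OF A] by blast
    moreover from u obtain w where "f w \<noteq> 0" "length w = length u"
      unfolding fa_subst_def by (metis (mono_tags, lifting) empty_Collect_eq mem_Collect_eq sum.empty)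
    ultimately show "u \<in> (\<Union>w\<in>{w. f w \<noteq> 0}. words n (length w))"
      by (auto simp: words_def)
  qed
  moreover have "finite (\<Union>w\<in>{w. f w \<noteq> 0}. words n (length w))"
    using fa_carrier_finite[OF f] by simp
  ultimately show ?thesis
    unfolding fa_carrier_def using fa_subst_outside[OF A] by (auto intro: finite_subset)
qed

lemma fa_subst_zero: "fa_subst A (\<lambda>_. 0) = (\<lambda>_. 0)"
  by (simp add: fa_subst_def)

lemma fa_subst_add:
  "f \<in> fa_carrier n \<Longrightarrow> g \<in> fa_carrier n \<Longrightarrow>
    fa_subst A (\<lambda>u. f u + g u) = (\<lambda>u. fa_subst A f u + fa_subst A g u)"
  by (intro ext) (simp add: fa_subst_eq_sum_words[OF fa_carrier_add] fa_subst_eq_sum_words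
      distrib_right sum.distrib)

lemma fa_subst_diff:
  "f \<in> fa_carrier n \<Longrightarrow> g \<in> fa_carrier n \<Longrightarrow>
    fa_subst A (\<lambda>u. f u - g u) = (\<lambda>u. fa_subst A f u - fa_subst A g u)"
  by (intro ext) (simp add: fa_subst_eq_sum_words[OF fa_carrier_diff] fa_subst_eq_sum_words
      left_diff_distrib sum_subtractf)

lemma fa_subst_smult:
  "f \<in> fa_carrier n \<Longrightarrow> fa_subst A (\<lambda>u. c * f u) = (\<lambda>u. c * fa_subst A f u)"
  by (intro ext) (simp add: fa_subst_eq_sum_words[OF fa_carrier_smult] fa_subst_eq_sum_words
      sum_distrib_left mult.assoc)

lemma fa_subst_word:
  "fa_subst A (fa_word w) u = (if length w = length u then \<Prod>t<length u. A (u ! t) (w ! t) else 0)"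
proof -
  have "{w'. fa_word w w' \<noteq> (0::'a) \<and> length w' = length u} = (if length w = length u then {w} else {})"
    by (auto simp: fa_word_def)
  then show ?thesis unfolding fa_subst_def by (simp add: fa_word_def)
qed

lemma fa_subst_matmul:
  assumes f: "f \<in> fa_carrier n" and A: "is_nmat n A" and B: "is_nmat n B"
  shows "fa_subst B (fa_subst A f) = fa_subst (matmul n B A) f"
proof
  fix u :: "nat list"
  let ?L = "length u"
  have "fa_subst B (fa_subst A f) u
      = (\<Sum>v\<in>words n ?L. (\<Sum>w\<in>words n ?L. f w * (\<Prod>t<?L. A (v ! t) (w ! t))) * (\<Prod>t<?L. B (u ! t) (v ! t)))"
    using fa_subst_eq_sum_words[OF fa_subst_in_carrier[OF f A]] fa_subst_eq_sum_words[OF f]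
    by (simp add: words_def)
  also have "\<dots> = (\<Sum>w\<in>words n ?L. f w * (\<Sum>v\<in>words n ?L. \<Prod>t<?L. B (u ! t) (v ! t) * A (v ! t) (w ! t)))"
    by (simp add: sum_distrib_right sum_distrib_left prod.distrib mult_ac) (rule sum.swap)
  also have "\<dots> = (\<Sum>w\<in>words n ?L. f w * (\<Prod>t<?L. matmul n B A (u ! t) (w ! t)))"
  proof -
    have "(\<Sum>v\<in>words n ?L. \<Prod>t<?L. B (u ! t) (v ! t) * A (v ! t) (w ! t))
        = (\<Prod>t<?L. \<Sum>l<n. B (u ! t) l * A l (w ! t))" for w
      by (rule sum_words_prod)
    then show ?thesis by (simp only: matmul_def)
  qed
  also have "\<dots> = fa_subst (matmul n B A) f u"
    by (simp add: fa_subst_eq_sum_words[OF f])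
  finally show "fa_subst B (fa_subst A f) u = fa_subst (matmul n B A) f u" .
qed

lemma fa_subst_idm:
  assumes f: "f \<in> fa_carrier n"
  shows "fa_subst (idm n) f = f"
proof
  fix u :: "nat list"
  show "fa_subst (idm n) f u = f u"
  proof (cases "set u \<subseteq> {..<n}")
    case True
    have "(\<Prod>t<length u. idm n (u ! t) (w ! t)) = (if w = u then 1 else 0)"
      if w: "w \<in> words n (length u)" for w
    proof (cases "w = u")
      case True
      then show ?thesis
        using \<open>set u \<subseteq> {..<n}\<close> by (auto simp: idm_def intro!: prod.neutral)
          (meson lessThan_iff nth_mem subsetD)
    next
      case False
      then obtain t where "t < length u" "u ! t \<noteq> w ! t"
        using w by (auto simp: words_def list_eq_iff_nth_eq)
      then show ?thesis using False by (auto simp: idm_def intro!: prod_zero)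
    qed
    note idm_prod = this
    have "fa_subst (idm n) f u = (\<Sum>w\<in>words n (length u). f w * (if w = u then 1 else 0))"
      unfolding fa_subst_eq_sum_words[OF f] by (intro sum.cong refl) (simp only: idm_prod)
    also have "\<dots> = (\<Sum>w\<in>words n (length u). if w = u then f w else 0)"
      by (intro sum.cong refl) simp
    also have "\<dots> = f u"
    proof -
      have "u \<in> words n (length u)" using True by (simp add: words_def)
      then show ?thesis by (simp add: sum.delta[OF finite_words])
    qed
    finally show ?thesis .
  next
    case False
    then have "f u = 0" using fa_carrier_letters[OF f] by blast
    then show ?thesis using fa_subst_outside[OF is_nmat_idm False] by simp
  qed
qed

lemma fa_subst_fa_mult:
  assumes f: "f \<in> fa_carrier n" and g: "g \<in> fa_carrier n"
  shows "fa_subst A (fa_mult f g) = fa_mult (fa_subst A f) (fa_subst A g)"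
proof
  fix u :: "nat list"
  let ?L = "length u"
  let ?P = "\<lambda>u w. \<Prod>t<length u. A (u ! t) (w ! t)"
  have "fa_subst A (fa_mult f g) u
      = (\<Sum>w\<in>words n ?L. (\<Sum>i\<le>?L. f (take i w) * g (drop i w)) * ?P u w)"
    unfolding fa_subst_eq_sum_words[OF fa_carrier_mult[OF f g]]
    by (intro sum.cong refl) (simp add: words_def fa_mult_def)
  also have "\<dots> = (\<Sum>i\<le>?L. \<Sum>w\<in>words n ?L. f (take i w) * g (drop i w) * ?P u w)"
    by (simp add: sum_distrib_right) (rule sum.swap)
  also have "\<dots> = (\<Sum>i\<le>?L. fa_subst A f (take i u) * fa_subst A g (drop i u))"
  proof (rule sum.cong[OF refl])
    fix i assume "i \<in> {..?L}"
    then have i: "i \<le> ?L" by simp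
    have "(\<Sum>w\<in>words n ?L. f (take i w) * g (drop i w) * ?P u w)
       = (\<Sum>(a, b)\<in>words n i \<times> words n (?L - i). f (take i (a @ b)) * g (drop i (a @ b)) * ?P u (a @ b))"
      using sum.reindex_bij_betw[OF bij_betw_append_words[OF i],
          of "\<lambda>w. f (take i w) * g (drop i w) * ?P u w"]
      by (simp add: case_prod_unfold)
    also have "\<dots> = (\<Sum>(a, b)\<in>words n i \<times> words n (?L - i). (f a * ?P (take i u) a) * (g b * ?P (drop i u) b))"
    proof (rule sum.cong[OF refl], clarify)
      fix a b assume ab: "a \<in> words n i" "b \<in> words n (?L - i)"
      have "?P u (a @ b) = (\<Prod>t<i. A (u ! t) ((a @ b) ! t)) * (\<Prod>t<?L - i. A (u ! (i + t)) ((a @ b) ! (i + t)))"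
        by (rule prod_lessThan_split[OF i])
      also have "\<dots> = ?P (take i u) a * ?P (drop i u) b"
        using ab i by (simp add: words_def nth_append min_def)
      finally show "f (take i (a @ b)) * g (drop i (a @ b)) * ?P u (a @ b)
          = (f a * ?P (take i u) a) * (g b * ?P (drop i u) b)"
        using ab by (simp add: words_def)
    qed
    also have "\<dots> = (\<Sum>a\<in>words n i. f a * ?P (take i u) a) * (\<Sum>b\<in>words n (?L - i). g b * ?P (drop i u) b)"
      by (simp add: sum_product sum.cartesian_product)
    also have "\<dots> = fa_subst A f (take i u) * fa_subst A g (drop i u)"
      using i by (simp add: fa_subst_eq_sum_words[OF f] fa_subst_eq_sum_words[OF g] min_def)
    finally show "(\<Sum>w\<in>words n ?L. f (take i w) * g (drop i w) * ?P u w)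
        = fa_subst A f (take i u) * fa_subst A g (drop i u)" .
  qed
  also have "\<dots> = fa_mult (fa_subst A f) (fa_subst A g) u"
    by (simp add: fa_mult_def)
  finally show "fa_subst A (fa_mult f g) u = fa_mult (fa_subst A f) (fa_subst A g) u" .
qed

section \<open>The group of graded automorphisms\<close>

lemma qrel_in_carrier: "i < n \<Longrightarrow> j < n \<Longrightarrow> qrel q i j \<in> fa_carrier n"
  unfolding qrel_def by (intro fa_carrier_diff fa_carrier_smult fa_word_in_carrier) auto

lemma qrel_in_qideal: "i < n \<Longrightarrow> j < n \<Longrightarrow> qrel q i j \<in> qideal n q"
  using qideal.gen[of i n j "fa_word []" "fa_word []" q] by (simp add: fa_word_in_carrier)

lemma qideal_subset_carrier: "f \<in> qideal n q \<Longrightarrow> f \<in> fa_carrier n"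
  by (induction rule: qideal.induct)
    (auto intro: fa_carrier_zero fa_carrier_add fa_carrier_mult qrel_in_carrier)

lemma qideal_sum:
  "finite S \<Longrightarrow> (\<And>k. k \<in> S \<Longrightarrow> F k \<in> qideal n q) \<Longrightarrow> (\<lambda>u. \<Sum>k\<in>S. F k u) \<in> qideal n q"
  by (induction S rule: finite_induct) (auto intro: qideal.zero qideal.add)

definition preserves_qideal :: "nat \<Rightarrow> 'a::field mat \<Rightarrow> 'a mat \<Rightarrow> bool" where
  "preserves_qideal n q A \<longleftrightarrow> (\<forall>f\<in>qideal n q. fa_subst A f \<in> qideal n q)"

text \<open>Surjectivity and injectivity on the quotient come for free from the inverse
  substitution.\<close>

lemma Mq_iff_preserves_qideal:
  assumes A: "is_nmat n A" and B: "is_nmat n B"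
    and AB: "matmul n A B = idm n" and BA: "matmul n B A = idm n"
  shows "A \<in> Mq n q \<longleftrightarrow> preserves_qideal n q A \<and> preserves_qideal n q B"
proof -
  have A_B: "fa_subst A (fa_subst B f) = f" if "f \<in> fa_carrier n" for f
    using fa_subst_matmul[OF that B A] AB fa_subst_idm[OF that] by simp
  have B_A: "fa_subst B (fa_subst A f) = f" if "f \<in> fa_carrier n" for f
    using fa_subst_matmul[OF that A B] BA fa_subst_idm[OF that] by simp
  have "A \<in> GL n" using A B AB BA by (auto simp: GL_iff)
  show ?thesis
  proof
    assume "A \<in> Mq n q"
    then have pres_A: "preserves_qideal n q A"
      and inj: "\<And>f. f \<in> fa_carrier n \<Longrightarrow> fa_subst A f \<in> qideal n q \<Longrightarrow> f \<in> qideal n q"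
      by (auto simp: Mq_def preserves_qideal_def)
    have "preserves_qideal n q B"
      unfolding preserves_qideal_def
      using inj fa_subst_in_carrier[OF qideal_subset_carrier B] A_B[OF qideal_subset_carrier]
      by simp
    with pres_A show "preserves_qideal n q A \<and> preserves_qideal n q B" ..
  next
    assume pres: "preserves_qideal n q A \<and> preserves_qideal n q B"
    have "\<exists>f\<in>fa_carrier n. (\<lambda>u. fa_subst A f u - g u) \<in> qideal n q" if "g \<in> fa_carrier n" for g
      using that A_B[OF that] fa_subst_in_carrier[OF that B] qideal.zero
      by (intro bexI[of _ "fa_subst B g"]) auto
    moreover have "f \<in> qideal n q" if "f \<in> fa_carrier n" "fa_subst A f \<in> qideal n q" for f
      using that B_A pres by (metis preserves_qideal_def)
    ultimately show "A \<in> Mq n q"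
      using \<open>A \<in> GL n\<close> pres by (simp add: Mq_def preserves_qideal_def)
  qed
qed

lemma Mq_preserves_qideal: "A \<in> Mq n q \<Longrightarrow> f \<in> qideal n q \<Longrightarrow> fa_subst A f \<in> qideal n q"
  by (simp add: Mq_def)

lemma preserves_qideal_matmul:
  assumes "is_nmat n A" "is_nmat n B" "preserves_qideal n q A" "preserves_qideal n q B"
  shows "preserves_qideal n q (matmul n A B)"
  unfolding preserves_qideal_def
proof
  fix f assume f: "f \<in> qideal n q"
  have "fa_subst B f \<in> qideal n q" using assms(4) f by (simp add: preserves_qideal_def)
  then have "fa_subst A (fa_subst B f) \<in> qideal n q" using assms(3) by (simp add: preserves_qideal_def)
  then show "fa_subst (matmul n A B) f \<in> qideal n q"
    using fa_subst_matmul[OF qideal_subset_carrier[OF f] assms(2,1)] by simp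
qed

lemma preserves_qideal_idm: "preserves_qideal n q (idm n)"
  by (simp add: preserves_qideal_def fa_subst_idm qideal_subset_carrier)

lemma Mq_inverse:
  assumes "A \<in> Mq n q" "is_nmat n B" "matmul n A B = idm n" "matmul n B A = idm n"
  shows "B \<in> Mq n q"
proof -
  have A: "is_nmat n A" using assms(1) by (simp add: Mq_def GL_is_nmat)
  then have "preserves_qideal n q A \<and> preserves_qideal n q B"
    using Mq_iff_preserves_qideal[OF A assms(2-4)] assms(1) by simp
  then show ?thesis
    using Mq_iff_preserves_qideal[OF assms(2) A assms(4,3)] by simp
qed

lemma Mq_matmul:
  assumes "A \<in> Mq n q" "B \<in> Mq n q"
  shows "matmul n A B \<in> Mq n q"
proof -
  have A: "is_nmat n A" and B: "is_nmat n B"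
    using assms by (simp_all add: Mq_def GL_is_nmat)
  obtain A' where A': "is_nmat n A'" "matmul n A A' = idm n" "matmul n A' A = idm n"
    using assms(1) by (auto simp: Mq_def elim: GL_inverseE)
  obtain B' where B': "is_nmat n B'" "matmul n B B' = idm n" "matmul n B' B = idm n"
    using assms(2) by (auto simp: Mq_def elim: GL_inverseE)
  have pres: "preserves_qideal n q A" "preserves_qideal n q A'"
    "preserves_qideal n q B" "preserves_qideal n q B'"
    using assms Mq_iff_preserves_qideal[OF A A'(1-3)] Mq_iff_preserves_qideal[OF B B'(1-3)] by auto
  have "matmul n (matmul n A B) (matmul n B' A') = idm n"
    by (metis A'(1,2) B'(2) matmul_assoc matmul_idm_left)
  moreover have "matmul n (matmul n B' A') (matmul n A B) = idm n"
    by (metis A'(3) B B'(3) matmul_assoc matmul_idm_left)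
  ultimately show ?thesis
    using Mq_iff_preserves_qideal[of n "matmul n A B" "matmul n B' A'"] pres A B A'(1) B'(1)
    by (simp add: is_nmat_matmul preserves_qideal_matmul)
qed

lemma idm_in_Mq: "(idm n :: 'a::field mat) \<in> Mq n q"
proof -
  have idm_idm: "matmul n (idm n) (idm n) = (idm n :: 'a mat)"
    by (rule matmul_idm_left[OF is_nmat_idm])
  show ?thesis
    using Mq_iff_preserves_qideal[OF is_nmat_idm is_nmat_idm idm_idm idm_idm] preserves_qideal_idm
    by blast
qed

lemma group_Mgrp: "group (Mgrp n q)"
proof (rule groupI)
  show "\<one>\<^bsub>Mgrp n q\<^esub> \<in> carrier (Mgrp n q)"
    by (simp add: Mgrp_def idm_in_Mq)
  show "x \<otimes>\<^bsub>Mgrp n q\<^esub> y \<in> carrier (Mgrp n q)"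
    if "x \<in> carrier (Mgrp n q)" "y \<in> carrier (Mgrp n q)" for x y
    using that by (simp add: Mgrp_def Mq_matmul)
  show "x \<otimes>\<^bsub>Mgrp n q\<^esub> y \<otimes>\<^bsub>Mgrp n q\<^esub> z = x \<otimes>\<^bsub>Mgrp n q\<^esub> (y \<otimes>\<^bsub>Mgrp n q\<^esub> z)" for x y z
    by (simp add: Mgrp_def matmul_assoc)
  show "\<one>\<^bsub>Mgrp n q\<^esub> \<otimes>\<^bsub>Mgrp n q\<^esub> x = x" if "x \<in> carrier (Mgrp n q)" for x
    using that by (simp add: Mgrp_def Mq_def GL_is_nmat matmul_idm_left)
  show "\<exists>y\<in>carrier (Mgrp n q). y \<otimes>\<^bsub>Mgrp n q\<^esub> x = \<one>\<^bsub>Mgrp n q\<^esub>"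
    if x: "x \<in> carrier (Mgrp n q)" for x
  proof -
    obtain y where "is_nmat n y" "matmul n x y = idm n" "matmul n y x = idm n"
      using x by (auto simp: Mgrp_def Mq_def elim: GL_inverseE)
    then show ?thesis using x Mq_inverse[of x n q y] by (auto simp: Mgrp_def)
  qed
qed

lemma Mgrp_inv_eq:
  assumes "A \<in> Mq n q" "is_nmat n B" "matmul n A B = idm n" "matmul n B A = idm n"
  shows "inv\<^bsub>Mgrp n q\<^esub> A = B"
proof -
  interpret group "Mgrp n q" by (rule group_Mgrp)
  show ?thesis
    using inv_equality[of B A] Mq_inverse[OF assms] assms by (simp add: Mgrp_def)
qed


section \<open>Degree-two coefficients of the ideal\<close>

lemma qrel_outside_degree2:
  assumes "length w \<noteq> 2"
  shows "qrel q i j w = 0"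
proof -
  have "w \<noteq> [j, i]" "w \<noteq> [i, j]" using assms by auto
  then show ?thesis by (simp add: qrel_def fa_word_def)
qed

lemma fa_mult_fa_mult_degree2:
  assumes r: "\<And>w. length w \<noteq> 2 \<Longrightarrow> r w = 0" and u: "length u = 2"
  shows "fa_mult (fa_mult a r) b u = a [] * r u * b []"
proof -
  obtain x y where "u = [x, y]"
    using u by (auto simp: length_Suc_conv numeral_2_eq_2)
  moreover have "r [] = 0" "r [x] = 0" "r [y] = 0" using r by auto
  ultimately show ?thesis by (simp add: fa_mult_def numeral_2_eq_2)
qed

text \<open>The ideal is generated in degree two, so a linear functional on degree-two words that
  kills all relations kills the whole ideal.\<close>

lemma qideal_degree2_functional:
  assumes f: "f \<in> qideal n q" and uv: "length u = 2" "length v = 2"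
    and rel: "\<And>i j. i < n \<Longrightarrow> j < n \<Longrightarrow> c * qrel q i j u + d * qrel q i j v = 0"
  shows "c * f u + d * f v = 0"
  using f
proof (induction rule: qideal.induct)
  case zero
  then show ?case by simp
next
  case (add f g)
  have "c * (f u + g u) + d * (f v + g v) = (c * f u + d * f v) + (c * g u + d * g v)"
    by (simp add: algebra_simps)
  then show ?case using add.IH by simp
next
  case (gen i j a b)
  have "c * fa_mult (fa_mult a (qrel q i j)) b u + d * fa_mult (fa_mult a (qrel q i j)) b v
      = a [] * b [] * (c * qrel q i j u + d * qrel q i j v)"
    by (simp add: fa_mult_fa_mult_degree2[OF qrel_outside_degree2] uv algebra_simps)
  then show ?case using rel[OF gen(1,2)] by simp
qed

lemma fa_subst_qrel_degree2:
  assumes "i < n" "j < n"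
  shows "fa_subst X (qrel q i j) [x, y] = X x j * X y i - q i j * (X x i * X y j)"
proof -
  have words: "fa_word [j, i] \<in> fa_carrier n" "fa_word [i, j] \<in> fa_carrier n"
    using assms by (auto intro!: fa_word_in_carrier)
  show ?thesis
    unfolding qrel_def fa_subst_diff[OF words(1) fa_carrier_smult[OF words(2)]]
      fa_subst_smult[OF words(2)]
    by (simp add: fa_subst_word numeral_2_eq_2 lessThan_Suc)
qed


lemma fa_mult_fa_mult_double_sum:
  "fa_mult (fa_mult a (\<lambda>u. \<Sum>x\<in>S. \<Sum>y\<in>T. c x y * r x y u)) b
    = (\<lambda>u. \<Sum>x\<in>S. \<Sum>y\<in>T. fa_mult (fa_mult (\<lambda>v. c x y * a v) (r x y)) b u)"
proof -
  have "fa_mult a (\<lambda>u. \<Sum>x\<in>S. \<Sum>y\<in>T. c x y * r x y u)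
      = (\<lambda>v. \<Sum>x\<in>S. \<Sum>y\<in>T. fa_mult (\<lambda>v. c x y * a v) (r x y) v)"
    by (rule ext) (simp add: fa_mult_sum_right fa_mult_smult_right fa_mult_smult_left)
  then show ?thesis by (intro ext) (simp add: fa_mult_sum_left)
qed

lemma sum_sum_fa_word:
  "(\<Sum>x<n. \<Sum>y<n. g x y * fa_word [x, y] u) =
    (if length u = 2 \<and> u ! 0 < n \<and> u ! 1 < n then g (u ! 0) (u ! 1) else (0::'a::field))"
proof (cases "length u = 2")
  case True
  then obtain s t where u: "u = [s, t]"
    by (auto simp: length_Suc_conv numeral_2_eq_2)
  have "g x y * fa_word [x, y] u = (if x = s then (if y = t then g x y else 0) else 0)" for x y
    unfolding u fa_word_def by simp
  then have "(\<Sum>x<n. \<Sum>y<n. g x y * fa_word [x, y] u)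
      = (\<Sum>x<n. if x = s then (\<Sum>y<n. if y = t then g x y else 0) else 0)"
    by (intro sum.cong refl) (cases "x = s"; simp)
  also have "\<dots> = (\<Sum>x<n. if x = s then (if t < n then g x t else 0) else 0)"
    by (simp only: sum.delta[OF finite_lessThan] lessThan_iff)
  also have "\<dots> = (if s < n \<and> t < n then g s t else 0)"
    by (simp only: sum.delta[OF finite_lessThan] lessThan_iff) simp
  finally show ?thesis using u by simp
next
  case False
  then have "fa_word [x, y] u = (0::'a)" for x y by (auto simp: fa_word_def)
  then show ?thesis using False by simp
qed

section \<open>Block-diagonal matrices\<close>

definition block_diag :: "nat \<Rightarrow> 'a mat \<Rightarrow> 'b::zero mat \<Rightarrow> bool" where
  "block_diag n q m \<longleftrightarrow> (\<forall>i<n. \<forall>j<n. blk n q i \<noteq> blk n q j \<longrightarrow> m i j = 0)"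

lemma ImPhi_iff: "m \<in> ImPhi n q \<longleftrightarrow> m \<in> GL n \<and> block_diag n q m"
  by (simp add: ImPhi_def block_diag_def)

lemma blk_eq_iff: "i < n \<Longrightarrow> blk n q i = blk n q j \<longleftrightarrow> (\<forall>k<n. q i k = q j k)"
  by (auto simp: blk_def)

lemma block_diag_matmul:
  assumes a: "block_diag n q a" and b: "block_diag n q b"
  shows "block_diag n q (matmul n a b)"
  unfolding block_diag_def
proof (intro allI impI)
  fix i j assume ij: "i < n" "j < n" "blk n q i \<noteq> blk n q j"
  have "a i l * b l j = 0" if "l < n" for l
    using a b ij that unfolding block_diag_def by (cases "blk n q i = blk n q l") auto
  then show "matmul n a b i j = 0" unfolding matmul_def by (intro sum.neutral) simp
qed

text \<open>Block-diagonal matrices are exactly those commuting with the projections onto the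
  blocks, which makes closure under inverses a matter of linear algebra.\<close>

lemma block_diag_iff_commute:
  fixes m :: "'a::field mat"
  assumes m: "is_nmat n m"
  shows "block_diag n q m \<longleftrightarrow>
    (\<forall>j<n. let P = diag_proj n (\<lambda>a. blk n q a = blk n q j) in matmul n m P = matmul n P m)"
  (is "_ \<longleftrightarrow> (\<forall>j<n. ?commutes j)")
proof
  assume block: "block_diag n q m"
  show "\<forall>j<n. ?commutes j"
  proof (intro allI impI)
    fix j
    have "matmul n m (diag_proj n (\<lambda>a. blk n q a = blk n q j)) a b
        = matmul n (diag_proj n (\<lambda>a. blk n q a = blk n q j)) m a b" for a b
    proof (cases "m a b = 0")
      case False
      then have "a < n" "b < n" using is_nmat_outside[OF m] by (meson not_le)+
      with False block have "blk n q a = blk n q b" by (auto simp: block_diag_def)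
      then show ?thesis by (simp add: matmul_diag_proj_left matmul_diag_proj_right \<open>a < n\<close> \<open>b < n\<close>)
    qed (simp add: matmul_diag_proj_left matmul_diag_proj_right)
    then show "?commutes j" by (auto simp: Let_def)
  qed
next
  assume commutes: "\<forall>j<n. ?commutes j"
  show "block_diag n q m"
    unfolding block_diag_def
  proof (intro allI impI)
    fix i j assume ij: "i < n" "j < n" "blk n q i \<noteq> blk n q j"
    have "matmul n m (diag_proj n (\<lambda>a. blk n q a = blk n q j)) i j
        = matmul n (diag_proj n (\<lambda>a. blk n q a = blk n q j)) m i j"
      using commutes ij(2) by (simp add: Let_def)
    then show "m i j = 0"
      using ij by (simp add: matmul_diag_proj_left matmul_diag_proj_right)
  qed
qed

lemma block_diag_inverse:
  fixes m :: "'a::field mat"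
  assumes "block_diag n q m" "is_nmat n m" "is_nmat n B"
    and "matmul n m B = idm n" "matmul n B m = idm n"
  shows "block_diag n q B"
  using assms matmul_inverse_commute[OF assms(2,3) is_nmat_diag_proj assms(4,5)]
  by (simp add: block_diag_iff_commute Let_def)

section \<open>Automorphisms respect the parameters\<close>

locale quantum_space =
  fixes n :: nat and q :: "'a::field mat"
  assumes q_mult_swap: "\<And>i j. i < n \<Longrightarrow> j < n \<Longrightarrow> q i j * q j i = 1"
    and q_diag: "\<And>i. i < n \<Longrightarrow> q i i = 1"
begin

lemma qideal_coeff_square:
  assumes "f \<in> qideal n q"
  shows "f [a, a] = 0"
proof -
  have "1 * qrel q i j [a, a] + 0 * qrel q i j [a, a] = 0" if "i < n" "j < n" for i j
    using that q_diag by (auto simp: qrel_def fa_word_def)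
  then show ?thesis
    using qideal_degree2_functional[OF assms, of "[a, a]" "[a, a]" 1 0] by simp
qed

lemma qideal_coeff_swap:
  assumes "f \<in> qideal n q" "a \<noteq> b"
  shows "f [a, b] + q a b * f [b, a] = 0"
proof -
  have "qrel q i j [a, b] + q a b * qrel q i j [b, a] = 0" if "i < n" "j < n" for i j
    using that assms(2) q_mult_swap[of j i] by (auto simp: qrel_def fa_word_def)
  then show ?thesis
    using qideal_degree2_functional[of f n q "[a, b]" "[b, a]" 1 "q a b"] assms(1) by simp
qed

lemma Mq_entry_square:
  assumes "X \<in> Mq n q" "i < n" "j < n"
  shows "X a i * X a j * (1 - q i j) = 0"
proof -
  have "fa_subst X (qrel q i j) \<in> qideal n q"
    using assms Mq_preserves_qideal qrel_in_qideal by blast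
  then have "fa_subst X (qrel q i j) [a, a] = 0" by (rule qideal_coeff_square)
  then show ?thesis by (simp add: fa_subst_qrel_degree2[OF assms(2,3)] algebra_simps)
qed

lemma Mq_entry_swap:
  assumes "X \<in> Mq n q" "i < n" "j < n" "a \<noteq> b"
  shows "X a j * X b i * (1 - q a b * q i j) = X a i * X b j * (q i j - q a b)"
proof -
  have "fa_subst X (qrel q i j) \<in> qideal n q"
    using assms Mq_preserves_qideal qrel_in_qideal by blast
  then have "fa_subst X (qrel q i j) [a, b] + q a b * fa_subst X (qrel q i j) [b, a] = 0"
    using assms(4) by (rule qideal_coeff_swap)
  moreover have "X a j * X b i * (1 - q a b * q i j) - X a i * X b j * (q i j - q a b)
      = fa_subst X (qrel q i j) [a, b] + q a b * fa_subst X (qrel q i j) [b, a]"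
    unfolding fa_subst_qrel_degree2[OF assms(2,3)] by algebra
  ultimately show ?thesis by simp
qed

text \<open>If \<open>q a b \<noteq> 1\<close>, the two identities above make rows \<open>a\<close> and \<open>b\<close> of \<open>X\<close>
  proportional.\<close>

lemma Mq_column_entries:
  assumes X: "X \<in> Mq n q" and abi: "a < n" "b < n" "i < n"
    and nonzero: "X a i \<noteq> 0" "X b i \<noteq> 0"
  shows "q a b = 1"
proof (rule ccontr)
  assume q_ab: "q a b \<noteq> 1"
  then have ab: "a \<noteq> b" using q_diag abi by auto
  have "X a j * X b i = X a i * X b j" if j: "j < n" for j
  proof (cases "X a j = 0")
    case False
    then have "q i j = 1" using Mq_entry_square[OF X abi(3) j, of a] nonzero by simp
    then have "X a j * X b i * (1 - q a b) = X a i * X b j * (1 - q a b)"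
      using Mq_entry_swap[OF X abi(3) j ab] by simp
    then show ?thesis using q_ab by simp
  next
    case True
    have "X b j = 0"
    proof (rule ccontr)
      assume bj: "X b j \<noteq> 0"
      then have "q i j = 1" using Mq_entry_square[OF X abi(3) j, of b] nonzero by simp
      then have "0 = X a i * X b j * (1 - q a b)"
        using Mq_entry_swap[OF X abi(3) j ab] True by simp
      then show False using nonzero bj q_ab by simp
    qed
    with True show ?thesis by simp
  qed
  then have proportional: "X b j = (X b i / X a i) * X a j" if "j < n" for j
    using that nonzero by (simp add: field_simps)
  have "X \<in> GL n" using X by (simp add: Mq_def)
  then show False
    using GL_rows_not_proportional[OF _ abi(1,2) ab] proportional by blast
qed

lemma Mq_entries_q:
  assumes X: "X \<in> Mq n q" and abij: "a < n" "b < n" "i < n" "j < n"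
    and nonzero: "X a i \<noteq> 0" "X b j \<noteq> 0"
  shows "q a b = q i j"
proof (cases "a = b")
  case True
  then have "q i j = 1" using Mq_entry_square[OF X abij(3,4), of a] nonzero by simp
  then show ?thesis using True q_diag abij by simp
next
  case ab: False
  show ?thesis
  proof (cases "i = j")
    case True
    then show ?thesis using Mq_column_entries[OF X abij(1-3)] nonzero q_diag abij by simp
  next
    case False
    show ?thesis
    proof (rule ccontr)
      assume ne: "q a b \<noteq> q i j"
      then have "X a j \<noteq> 0" "X b i \<noteq> 0"
        using Mq_entry_swap[OF X abij(3,4) ab] nonzero by auto
      then have "q i j = 1" "q a b = 1"
        using Mq_entry_square[OF X abij(3,4), of a] Mq_column_entries[OF X abij(1-3)] nonzero
        by simp_all
      with ne show False by simp
    qed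
  qed
qed


section \<open>The subgroup \<open>Im \<Phi>\<close>\<close>

lemma block_diag_entries_q:
  assumes m: "block_diag n q m" and stij: "s < n" "t < n" "i < n" "j < n"
    and nonzero: "m s i \<noteq> 0" "m t j \<noteq> 0"
  shows "q s t = q i j"
proof -
  have "blk n q s = blk n q i" "blk n q t = blk n q j"
    using m stij nonzero by (auto simp: block_diag_def)
  then have "q s t = q i t" "q t i = q j i"
    using stij by (simp_all add: blk_eq_iff)
  moreover have "q i t * q t i = 1" "q i j * q j i = 1"
    using q_mult_swap stij by auto
  ultimately show ?thesis by (metis mult.commute mult.left_neutral mult.assoc)
qed

text \<open>A block-diagonal substitution sends each relation to a combination of relations: a
  monomial \<open>x\<^sub>s x\<^sub>t\<close> occurs in the image of \<open>x\<^sub>j x\<^sub>i - q\<^sub>i\<^sub>j x\<^sub>i x\<^sub>j\<close> only if \<open>s, t\<close>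
  lie in the blocks of \<open>j, i\<close>, and then \<open>q\<^sub>s\<^sub>t = q\<^sub>i\<^sub>j\<close>.\<close>

lemma fa_subst_qrel_block_diag:
  assumes m: "block_diag n q m" "is_nmat n m" and ij: "i < n" "j < n"
  shows "fa_subst m (qrel q i j) = (\<lambda>u. \<Sum>x<n. \<Sum>y<n. (m x j * m y i) * qrel q y x u)"
proof
  fix u :: "nat list"
  have "(\<Sum>x<n. \<Sum>y<n. (m x j * m y i) * qrel q y x u)
      = (\<Sum>x<n. \<Sum>y<n. (m x j * m y i) * fa_word [x, y] u)
        - (\<Sum>x<n. \<Sum>y<n. (m x j * m y i * q y x) * fa_word [y, x] u)"
    by (simp add: qrel_def algebra_simps sum_subtractf)
  also have "(\<Sum>x<n. \<Sum>y<n. (m x j * m y i * q y x) * fa_word [y, x] u)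
      = (\<Sum>x<n. \<Sum>y<n. (m y j * m x i * q x y) * fa_word [x, y] u)"
    by (rule sum.swap)
  finally have rhs: "(\<Sum>x<n. \<Sum>y<n. (m x j * m y i) * qrel q y x u) =
      (if length u = 2 \<and> u ! 0 < n \<and> u ! 1 < n then m (u ! 0) j * m (u ! 1) i else 0) -
      (if length u = 2 \<and> u ! 0 < n \<and> u ! 1 < n then m (u ! 1) j * m (u ! 0) i * q (u ! 0) (u ! 1) else 0)"
    by (simp only: sum_sum_fa_word)
  show "fa_subst m (qrel q i j) u = (\<Sum>x<n. \<Sum>y<n. (m x j * m y i) * qrel q y x u)"
  proof (cases "length u = 2")
    case True
    then obtain s t where u: "u = [s, t]"
      by (auto simp: length_Suc_conv numeral_2_eq_2)
    have lhs: "fa_subst m (qrel q i j) u = m s j * m t i - q i j * (m s i * m t j)"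
      unfolding u by (rule fa_subst_qrel_degree2[OF ij])
    show ?thesis
    proof (cases "s < n \<and> t < n")
      case True
      have "q i j * (m s i * m t j) = m t j * m s i * q s t"
      proof (cases "m s i = 0 \<or> m t j = 0")
        case False
        then have "q s t = q i j" using block_diag_entries_q[OF m(1) _ _ ij] True by blast
        then show ?thesis by simp
      qed auto
      with lhs have "fa_subst m (qrel q i j) u = m s j * m t i - m t j * m s i * q s t"
        by simp
      with rhs True show ?thesis by (simp add: u)
    next
      case False
      then have "m s j * m t i - q i j * (m s i * m t j) = 0"
        using is_nmat_outside[OF m(2)] by auto
      then show ?thesis using lhs rhs False by (simp add: u)
    qed
  next
    case False
    then have "{w. qrel q i j w \<noteq> 0 \<and> length w = length u} = {}"
      by (auto intro: qrel_outside_degree2)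
    then have "fa_subst m (qrel q i j) u = 0" unfolding fa_subst_def by (simp only: sum.empty)
    with rhs False show ?thesis by simp
  qed
qed

lemma block_diag_preserves_qideal:
  assumes m: "block_diag n q m" "is_nmat n m"
  shows "preserves_qideal n q m"
  unfolding preserves_qideal_def
proof
  fix f assume "f \<in> qideal n q"
  then show "fa_subst m f \<in> qideal n q"
  proof (induction rule: qideal.induct)
    case zero
    then show ?case by (simp add: fa_subst_zero qideal.zero)
  next
    case (add f g)
    then show ?case
      using fa_subst_add[OF qideal_subset_carrier[OF add.hyps(1)] qideal_subset_carrier[OF add.hyps(2)]]
      by (simp add: qideal.add)
  next
    case (gen i j a b)
    have "fa_subst m (fa_mult (fa_mult a (qrel q i j)) b)
        = fa_mult (fa_mult (fa_subst m a) (fa_subst m (qrel q i j))) (fa_subst m b)"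
      using fa_subst_fa_mult[OF fa_carrier_mult[OF gen(3) qrel_in_carrier[OF gen(1,2)]] gen(4)]
        fa_subst_fa_mult[OF gen(3) qrel_in_carrier[OF gen(1,2)]]
      by simp
    also have "\<dots> = (\<lambda>u. \<Sum>x<n. \<Sum>y<n.
        fa_mult (fa_mult (\<lambda>v. (m x j * m y i) * fa_subst m a v) (qrel q y x)) (fa_subst m b) u)"
      unfolding fa_subst_qrel_block_diag[OF m gen(1,2)] by (rule fa_mult_fa_mult_double_sum)
    also have "\<dots> \<in> qideal n q"
      using gen m(2)
      by (intro qideal_sum qideal.gen finite_lessThan) (auto intro!: fa_carrier_smult fa_subst_in_carrier)
    finally show ?case .
  qed
qed

lemma ImPhi_inverse:
  assumes "m \<in> ImPhi n q" "is_nmat n B" "matmul n m B = idm n" "matmul n B m = idm n"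
  shows "B \<in> ImPhi n q"
  using assms block_diag_inverse[of n q m B] by (auto simp: ImPhi_iff GL_iff)

lemma ImPhi_subset_Mq: "ImPhi n q \<subseteq> Mq n q"
proof
  fix m assume m: "m \<in> ImPhi n q"
  then have "m \<in> GL n" by (simp add: ImPhi_iff)
  then obtain B where B: "is_nmat n B" "matmul n m B = idm n" "matmul n B m = idm n"
    by (rule GL_inverseE)
  have "B \<in> ImPhi n q" using ImPhi_inverse[OF m B] .
  then show "m \<in> Mq n q"
    using m B Mq_iff_preserves_qideal[of n m B q]
    by (simp add: ImPhi_iff GL_is_nmat block_diag_preserves_qideal)
qed

lemma ImPhi_subgroup: "subgroup (ImPhi n q) (Mgrp n q)"
proof (rule group.subgroupI[OF group_Mgrp])
  show "ImPhi n q \<subseteq> carrier (Mgrp n q)"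
    using ImPhi_subset_Mq by (simp add: Mgrp_def)
  have "idm n \<in> ImPhi n q"
    unfolding ImPhi_iff block_diag_def by (intro conjI idm_in_GL) (auto simp: idm_def)
  then show "ImPhi n q \<noteq> {}" by blast
  show "a \<otimes>\<^bsub>Mgrp n q\<^esub> b \<in> ImPhi n q" if "a \<in> ImPhi n q" "b \<in> ImPhi n q" for a b
    using that by (simp add: Mgrp_def ImPhi_iff GL_matmul block_diag_matmul)
  show "inv\<^bsub>Mgrp n q\<^esub> a \<in> ImPhi n q" if a: "a \<in> ImPhi n q" for a
  proof -
    obtain B where B: "is_nmat n B" "matmul n a B = idm n" "matmul n B a = idm n"
      using a by (auto simp: ImPhi_iff elim: GL_inverseE)
    then show ?thesis
      using ImPhi_inverse[OF a B] Mgrp_inv_eq[OF subsetD[OF ImPhi_subset_Mq a] B] by simp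
  qed
qed

text \<open>A nonzero entry \<open>(i, j)\<close> of \<open>X m X\<^sup>-\<^sup>1\<close> comes from entries \<open>X\<^sub>i\<^sub>a, m\<^sub>a\<^sub>l, Y\<^sub>l\<^sub>j\<close>
  with \<open>a, l\<close> in one block; comparing with \<open>X\<^sub>k\<^sub>c Y\<^sub>c\<^sub>k \<noteq> 0\<close> via
  \<open>Mq_entries_q\<close> shows \<open>q\<^sub>i\<^sub>k = q\<^sub>j\<^sub>k\<close> for all \<open>k\<close>.\<close>

lemma conjugate_in_ImPhi:
  assumes X: "X \<in> Mq n q" and Y: "Y \<in> Mq n q" and XY: "matmul n X Y = idm n"
    and m: "m \<in> ImPhi n q"
  shows "matmul n (matmul n X m) Y \<in> ImPhi n q"
proof -
  have "matmul n (matmul n X m) Y i j = 0"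
    if ij: "i < n" "j < n" "blk n q i \<noteq> blk n q j" for i j
  proof (rule ccontr)
    assume "matmul n (matmul n X m) Y i j \<noteq> 0"
    then obtain l where l: "l < n" "matmul n X m i l \<noteq> 0" "Y l j \<noteq> 0"
      by (rule matmul_nonzeroE)
    then obtain a where a: "a < n" "X i a \<noteq> 0" "m a l \<noteq> 0"
      by (auto elim: matmul_nonzeroE)
    have blk_al: "blk n q a = blk n q l"
      using m a l by (auto simp: ImPhi_iff block_diag_def)
    have "q i k = q j k" if k: "k < n" for k
    proof -
      have "matmul n X Y k k \<noteq> 0" using XY k by (simp add: idm_def)
      then obtain c where c: "c < n" "X k c \<noteq> 0" "Y c k \<noteq> 0"
        by (rule matmul_nonzeroE)
      have "q i k = q a c" using Mq_entries_q[OF X ij(1) k a(1) c(1) a(2) c(2)] .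
      also have "\<dots> = q l c" using blk_al a(1) c(1) by (simp add: blk_eq_iff)
      also have "\<dots> = q j k" using Mq_entries_q[OF Y l(1) c(1) ij(2) k l(3) c(3)] .
      finally show ?thesis .
    qed
    then show False using ij by (simp add: blk_eq_iff)
  qed
  moreover have "matmul n (matmul n X m) Y \<in> GL n"
    using X Y m by (simp add: Mq_def ImPhi_iff GL_matmul)
  ultimately show ?thesis by (simp add: ImPhi_iff block_diag_def)
qed

lemma ImPhi_normal: "ImPhi n q \<lhd> Mgrp n q"
proof -
  interpret group "Mgrp n q" by (rule group_Mgrp)
  have "x \<otimes>\<^bsub>Mgrp n q\<^esub> h \<otimes>\<^bsub>Mgrp n q\<^esub> inv\<^bsub>Mgrp n q\<^esub> x \<in> ImPhi n q"
    if x: "x \<in> carrier (Mgrp n q)" and h: "h \<in> ImPhi n q" for x h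
  proof -
    have xM: "x \<in> Mq n q" using x by (simp add: Mgrp_def)
    obtain Y where Y: "is_nmat n Y" "matmul n x Y = idm n" "matmul n Y x = idm n"
      using xM by (auto simp: Mq_def elim: GL_inverseE)
    have "inv\<^bsub>Mgrp n q\<^esub> x = Y" using Mgrp_inv_eq[OF xM Y] .
    then show ?thesis
      using conjugate_in_ImPhi[OF xM Mq_inverse[OF xM Y] Y(2) h] by (simp add: Mgrp_def)
  qed
  then show ?thesis using ImPhi_subgroup normal_inv_iff by blast
qed

end

theorem lemma4p4:
  fixes n :: nat and q :: "'a::field mat"
  assumes "1 \<le> n"
    and "\<forall>i<n. \<forall>j<n. q i j * q j i = 1"
    and "\<forall>i<n. q i i = 1"
  shows "subgroup (ImPhi n q) (Mgrp n q) \<and> ImPhi n q \<lhd> Mgrp n q"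
proof -
  interpret quantum_space n q
    using assms(2,3) by unfold_locales auto
  show ?thesis using ImPhi_subgroup ImPhi_normal by blast
qed

end
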